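(* Let $D$ be an integral domain, $S$ a multiplicative subset of $D$, and $M$ a torsion-free $D$-module which is a $w$-module. Then: (1) If $M$ is an $S$-SM-module, then $M$ is a $w$-locally $S$-Noetherian module. (2) If $M$ is a $w$-locally $S$-Noetherian module which has finite $w$-character, then $M$ is an $S$-SM-module.
   Context: Let $K$ be the quotient field of $D$; $I_v=(I^{-1})^{-1}$ with $I^{-1}=\{a\in K\mid aI\subseteq D\}$; $\mathrm{GV}(D)$ is the set of finitely generated ideals $J$ with $J_v=D$. For a torsion-free module $N$, $N_w=\{x\in N\otimes K\mid xJ\subseteq N\text{ for some }J\in\mathrm{GV}(D)\}$; $N$ is a $w$-module if $N_w=N$; maximal $w$-ideals are proper ideals $I$ with $I_w=I$ maximal among such. A submodule $N$ of $M$ is $S$-$w$-finite if there exist $s\in S$ and a finitely generated submodule $F$ of $M$ with $Ns\subseteq F_w\subseteq N_w$; $M$ is an $S$-SM-module if every $w$-submodule ($L_w=L$) is $S$-$w$-finite. A submodule is $S$-finite if $Ls\subseteq F\subseteq L$ for some $s\in S$ and finitely generated $F$; a module is $S$-Noetherian if every submodule is $S$-finite. $M$ is $w$-locally $S$-Noetherian if for every maximal $w$-ideal $\mathfrak{m}$ of $D$, $M_{\mathfrak{m}}$ is an $S$-Noetherian $D_{\mathfrak{m}}$-module. With $(aD:M)=\{d\in D\mid Md\subseteq aD\}$, $M$ has finite $w$-character if for each nonzero $a\in M$ with $(aD:M)\neq D$, $(aD:M)$ is contained in only finitely many maximal $w$-ideals of $D$. *)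

theory Defs
  imports Complex_Main "HOL-Computational_Algebra.Fraction_Field"
begin

text \<open>The integral domain D is a type 'a of class idom; its quotient field
K is the type 'a fract. A torsion-free D-module M is represented (up to isomorphism)
as a D-submodule of a K-vector space V (with scalar multiplication sc); then
M tensor K is the set of x in V with d x in M for some nonzero d in D.\<close>

definition embD :: "'a::idom \<Rightarrow> 'a fract" where
  "embD d = Fract d 1"

definition mult_subset :: "'a::idom set \<Rightarrow> bool" where
  "mult_subset S \<longleftrightarrow> 1 \<in> S \<and> (\<forall>s\<in>S. \<forall>t\<in>S. s * t \<in> S)"

definition d_ideal :: "'a::idom set \<Rightarrow> bool" where
  "d_ideal I \<longleftrightarrow> 0 \<in> I \<and> (\<forall>x\<in>I. \<forall>y\<in>I. x + y \<in> I) \<and> (\<forall>a. \<forall>x\<in>I. a * x \<in> I)"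

definition fg_ideal :: "'a::idom set \<Rightarrow> bool" where
  "fg_ideal J \<longleftrightarrow> (\<exists>F. finite F \<and> J = {\<Sum>f\<in>F. c f * f | c. True})"

definition finv :: "'a::idom fract set \<Rightarrow> 'a fract set" where
  "finv A = {q. \<forall>x\<in>A. q * x \<in> range embD}"

definition vcl :: "'a::idom set \<Rightarrow> 'a fract set" where
  "vcl I = finv (finv (embD ` I))"

definition GV :: "'a::idom set set" where
  "GV = {J. d_ideal J \<and> fg_ideal J \<and> vcl J = range embD}"

definition wcl :: "('a::idom fract \<Rightarrow> 'v \<Rightarrow> 'v) \<Rightarrow> 'v set \<Rightarrow> 'v set" where
  "wcl sc N = {x. (\<exists>d. d \<noteq> 0 \<and> sc (embD d) x \<in> N) \<and>
                  (\<exists>J\<in>GV. \<forall>j\<in>J. sc (embD j) x \<in> N)}"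

definition w_ideal :: "'a::idom set \<Rightarrow> bool" where
  "w_ideal I \<longleftrightarrow> d_ideal I \<and> wcl (*) (embD ` I) = embD ` I"

definition max_w_ideal :: "'a::idom set \<Rightarrow> bool" where
  "max_w_ideal m \<longleftrightarrow> w_ideal m \<and> m \<noteq> UNIV \<and>
     (\<forall>I. w_ideal I \<and> I \<noteq> UNIV \<and> m \<subseteq> I \<longrightarrow> I = m)"

definition dsub :: "('a::idom fract \<Rightarrow> 'v::ab_group_add \<Rightarrow> 'v) \<Rightarrow> 'v set \<Rightarrow> bool" where
  "dsub sc L \<longleftrightarrow> 0 \<in> L \<and> (\<forall>x\<in>L. \<forall>y\<in>L. x + y \<in> L) \<and> (\<forall>d. \<forall>x\<in>L. sc (embD d) x \<in> L)"

definition dspan :: "('a::idom fract \<Rightarrow> 'v::ab_group_add \<Rightarrow> 'v) \<Rightarrow> 'v set \<Rightarrow> 'v set" where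
  "dspan sc G = {\<Sum>g\<in>G. sc (embD (c g)) g | c. True}"

definition S_w_finite :: "('a::idom fract \<Rightarrow> 'v::ab_group_add \<Rightarrow> 'v) \<Rightarrow> 'a set \<Rightarrow> 'v set \<Rightarrow> 'v set \<Rightarrow> bool" where
  "S_w_finite sc S M N \<longleftrightarrow> (\<exists>s\<in>S. \<exists>G. finite G \<and> G \<subseteq> M \<and>
      sc (embD s) ` N \<subseteq> wcl sc (dspan sc G) \<and> wcl sc (dspan sc G) \<subseteq> wcl sc N)"

definition S_SM :: "('a::idom fract \<Rightarrow> 'v::ab_group_add \<Rightarrow> 'v) \<Rightarrow> 'a set \<Rightarrow> 'v set \<Rightarrow> bool" where
  "S_SM sc S M \<longleftrightarrow> (\<forall>L. dsub sc L \<and> L \<subseteq> M \<and> wcl sc L = L \<longrightarrow> S_w_finite sc S M L)"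

definition Dloc :: "'a::idom set \<Rightarrow> 'a fract set" where
  "Dloc m = {embD a / embD s | a s. s \<notin> m}"

definition Mloc :: "('a::idom fract \<Rightarrow> 'v \<Rightarrow> 'v) \<Rightarrow> 'a set \<Rightarrow> 'v set \<Rightarrow> 'v set" where
  "Mloc sc m M = {sc (inverse (embD s)) x | x s. x \<in> M \<and> s \<notin> m}"

definition rsub :: "('k \<Rightarrow> 'v::ab_group_add \<Rightarrow> 'v) \<Rightarrow> 'k set \<Rightarrow> 'v set \<Rightarrow> bool" where
  "rsub sc R L \<longleftrightarrow> 0 \<in> L \<and> (\<forall>x\<in>L. \<forall>y\<in>L. x + y \<in> L) \<and> (\<forall>r\<in>R. \<forall>x\<in>L. sc r x \<in> L)"

definition rspan :: "('k \<Rightarrow> 'v::ab_group_add \<Rightarrow> 'v) \<Rightarrow> 'k set \<Rightarrow> 'v set \<Rightarrow> 'v set" where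
  "rspan sc R G = {\<Sum>g\<in>G. sc (c g) g | c. \<forall>g\<in>G. c g \<in> R}"

definition S_noetherian :: "('k \<Rightarrow> 'v::ab_group_add \<Rightarrow> 'v) \<Rightarrow> 'k set \<Rightarrow> 'k set \<Rightarrow> 'v set \<Rightarrow> bool" where
  "S_noetherian sc R T N \<longleftrightarrow> (\<forall>L. rsub sc R L \<and> L \<subseteq> N \<longrightarrow>
      (\<exists>t\<in>T. \<exists>G. finite G \<and> G \<subseteq> L \<and> sc t ` L \<subseteq> rspan sc R G \<and> rspan sc R G \<subseteq> L))"

definition w_loc_S_noetherian :: "('a::idom fract \<Rightarrow> 'v::ab_group_add \<Rightarrow> 'v) \<Rightarrow> 'a set \<Rightarrow> 'v set \<Rightarrow> bool" where
  "w_loc_S_noetherian sc S M \<longleftrightarrow>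
     (\<forall>m. max_w_ideal m \<longrightarrow> S_noetherian sc (Dloc m) (embD ` S) (Mloc sc m M))"

definition colon :: "('a::idom fract \<Rightarrow> 'v \<Rightarrow> 'v) \<Rightarrow> 'v \<Rightarrow> 'v set \<Rightarrow> 'a set" where
  "colon sc a M = {d. \<forall>x\<in>M. sc (embD d) x \<in> {sc (embD e) a | e. True}}"

definition finite_w_char :: "('a::idom fract \<Rightarrow> 'v::ab_group_add \<Rightarrow> 'v) \<Rightarrow> 'v set \<Rightarrow> bool" where
  "finite_w_char sc M \<longleftrightarrow> (\<forall>a\<in>M. a \<noteq> 0 \<and> colon sc a M \<noteq> UNIV \<longrightarrow>
      finite {m. max_w_ideal m \<and> colon sc a M \<subseteq> m})"

end

theory Submission
  imports Defs
begin

(*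
  The w-operation satisfies a local-global principle: for a D-submodule F, z lies in F_w iff for
  every maximal w-ideal m some t outside m has t z in F, i.e. z lies in the localization F_m.
  One direction holds because a proper w-ideal containing a GV-ideal is zero; for the other,
  Zorn's lemma puts every ideal containing no GV-ideal, such as the conductor (F : z), into a
  maximal w-ideal. Maximal w-ideals are prime, so D_m and M_m are the usual localizations.

  (1) A D_m-submodule N of M_m is the localization of the w-submodule N \<inter> M of M, and an
  S-w-finite presentation s (N \<inter> M) \<subseteq> F_w localizes to s N \<subseteq> F_m.

  (2) Let L be a w-submodule of M and a a nonzero element of L. At a maximal w-ideal m not
  containing (aD : M) the element a alone generates L_m; the maximal w-ideals containing (aD : M)
  are finitely many, and at each of them L_m is S-finite. With F generated by a and numerators of
  these local generators, and s the product of the local elements of S, the local-global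
  principle gives s L \<subseteq> F_w.
*)

lemma embD_mult: "embD (a * b) = embD a * embD b"
  by (simp add: embD_def)

lemma embD_add: "embD (a + b) = embD a + embD b"
  by (simp add: embD_def)

lemma embD_0 [simp]: "embD 0 = 0"
  by (simp add: embD_def Zero_fract_def)

lemma embD_1 [simp]: "embD 1 = 1"
  by (simp add: embD_def One_fract_def)

lemma embD_eq_iff [simp]: "embD a = embD b \<longleftrightarrow> a = b"
  by (simp add: embD_def eq_fract)

lemma embD_eq_0_iff [simp]: "embD a = 0 \<longleftrightarrow> a = 0"
  by (metis embD_0 embD_eq_iff)

lemma embD_in_image_iff [simp]: "embD x \<in> embD ` A \<longleftrightarrow> x \<in> A"
  by (rule inj_image_mem_iff) (simp add: inj_def)

lemma embD_sum: "embD (sum f A) = (\<Sum>x\<in>A. embD (f x))"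
  by (induct A rule: infinite_finite_induct) (simp_all add: embD_add)

lemma vector_space_fract_mult: "vector_space ((*) :: 'a::idom fract \<Rightarrow> _)"
  by unfold_locales (simp_all add: algebra_simps)

lemma dsub_embD_image_iff: "dsub (*) (embD ` I) \<longleftrightarrow> d_ideal I"
  by (auto simp: dsub_def d_ideal_def simp flip: embD_add embD_mult)

section \<open>Ideals of D and GV-ideals\<close>

lemma d_idealD:
  assumes "d_ideal I"
  shows "0 \<in> I" "x \<in> I \<Longrightarrow> y \<in> I \<Longrightarrow> x + y \<in> I" "x \<in> I \<Longrightarrow> a * x \<in> I"
  using assms by (auto simp: d_ideal_def)

lemma d_ideal_sum: "d_ideal I \<Longrightarrow> (\<And>x. x \<in> A \<Longrightarrow> g x \<in> I) \<Longrightarrow> sum g A \<in> I"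
  by (induct A rule: infinite_finite_induct) (auto intro: d_idealD)

lemma d_ideal_eq_UNIV: "d_ideal I \<Longrightarrow> 1 \<in> I \<Longrightarrow> I = UNIV"
  by (metis UNIV_eq_I d_idealD(3) mult.right_neutral)

lemma d_ideal_add_principal:
  assumes "d_ideal Q"
  shows "d_ideal {q + r * y | q r. q \<in> Q}"
  unfolding d_ideal_def
proof (intro conjI ballI allI)
  show "0 \<in> {q + r * y | q r. q \<in> Q}"
    using d_idealD(1)[OF assms] by force
next
  fix a b assume "a \<in> {q + r * y | q r. q \<in> Q}" "b \<in> {q + r * y | q r. q \<in> Q}"
  then obtain q1 r1 q2 r2 where "a = q1 + r1 * y" "b = q2 + r2 * y" "q1 \<in> Q" "q2 \<in> Q"
    by blast
  then have "a + b = (q1 + q2) + (r1 + r2) * y" "q1 + q2 \<in> Q"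
    using d_idealD(2)[OF assms] by (auto simp: algebra_simps)
  then show "a + b \<in> {q + r * y | q r. q \<in> Q}" by blast
next
  fix c a assume "a \<in> {q + r * y | q r. q \<in> Q}"
  then obtain q r where "a = q + r * y" "q \<in> Q" by blast
  then have "c * a = c * q + (c * r) * y" "c * q \<in> Q"
    using d_idealD(3)[OF assms \<open>q \<in> Q\<close>] by (simp_all add: algebra_simps)
  then show "c * a \<in> {q + r * y | q r. q \<in> Q}" by blast
qed

definition ideal_span :: "'a::idom set \<Rightarrow> 'a set" where
  "ideal_span F = {\<Sum>f\<in>F. c f * f | c. True}"

lemma fg_ideal_iff_ideal_span: "fg_ideal J \<longleftrightarrow> (\<exists>F. finite F \<and> J = ideal_span F)"
  by (simp add: fg_ideal_def ideal_span_def)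

lemma d_ideal_ideal_span: "d_ideal (ideal_span F)"
  unfolding d_ideal_def ideal_span_def
proof (intro conjI ballI allI)
  show "0 \<in> {\<Sum>f\<in>F. c f * f | c. True}"
    by (rule CollectI, rule exI[of _ "\<lambda>_. 0"]) simp
next
  fix x y assume "x \<in> {\<Sum>f\<in>F. c f * f | c. True}" "y \<in> {\<Sum>f\<in>F. c f * f | c. True}"
  then obtain c1 c2 where "x = (\<Sum>f\<in>F. c1 f * f)" "y = (\<Sum>f\<in>F. c2 f * f)" by auto
  then have "x + y = (\<Sum>f\<in>F. (c1 f + c2 f) * f)"
    by (simp add: sum.distrib algebra_simps)
  then show "x + y \<in> {\<Sum>f\<in>F. c f * f | c. True}" by auto
next
  fix a x assume "x \<in> {\<Sum>f\<in>F. c f * f | c. True}"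
  then obtain c where "x = (\<Sum>f\<in>F. c f * f)" by auto
  then have "a * x = (\<Sum>f\<in>F. (a * c f) * f)"
    by (simp add: sum_distrib_left algebra_simps)
  then show "a * x \<in> {\<Sum>f\<in>F. c f * f | c. True}" by auto
qed

lemma ideal_span_superset: "finite F \<Longrightarrow> F \<subseteq> ideal_span F"
proof
  fix f assume "finite F" "f \<in> F"
  have "(\<Sum>g\<in>F. (if g = f then 1 else 0) * g) = (\<Sum>g\<in>F. if g = f then g else 0)"
    by (rule sum.cong) simp_all
  then have "f = (\<Sum>g\<in>F. (if g = f then 1 else 0) * g)"
    using \<open>finite F\<close> \<open>f \<in> F\<close> by simp
  then show "f \<in> ideal_span F"
    unfolding ideal_span_def by (intro CollectI exI[of _ "\<lambda>g. if g = f then 1 else 0"]) simp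
qed

lemma ideal_span_least: "d_ideal I \<Longrightarrow> F \<subseteq> I \<Longrightarrow> ideal_span F \<subseteq> I"
  unfolding ideal_span_def by (auto intro!: d_ideal_sum d_idealD)

lemma GV_obtain_generators:
  assumes "J \<in> GV"
  obtains F where "finite F" "J = ideal_span F"
  using assms by (auto simp: GV_def fg_ideal_iff_ideal_span)

lemma finv_range: "finv (range embD) = range (embD :: 'a::idom \<Rightarrow> _)"
proof
  show "finv (range embD) \<subseteq> range (embD :: 'a \<Rightarrow> _)"
    unfolding finv_def by (metis (no_types, lifting) embD_1 mem_Collect_eq mult_1_right rangeI subsetI)
  show "range embD \<subseteq> finv (range (embD :: 'a \<Rightarrow> _))"
    unfolding finv_def by (auto simp flip: embD_mult)
qed

lemma subset_finv_finv: "A \<subseteq> finv (finv A)"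
  unfolding finv_def by (auto simp: mult.commute)

lemma range_embD_subset_finv: "range embD \<subseteq> finv (embD ` J)"
  unfolding finv_def by (auto simp flip: embD_mult)

lemma finv_ideal_spanI:
  assumes "\<forall>f\<in>F. q * embD f \<in> range embD"
  shows "q \<in> finv (embD ` ideal_span F)"
  unfolding finv_def ideal_span_def
proof clarsimp
  fix c
  have "q * embD (\<Sum>f\<in>F. c f * f) = (\<Sum>f\<in>F. embD (c f) * (q * embD f))"
    by (simp add: embD_sum embD_mult sum_distrib_left algebra_simps)
  also have "\<dots> \<in> range embD"
    using assms
  proof (induct F rule: infinite_finite_induct)
    case (insert x F)
    then show ?case by (auto simp flip: embD_mult embD_add)
  qed (auto intro: range_eqI[of _ _ 0])
  finally show "q * embD (\<Sum>f\<in>F. c f * f) \<in> range embD" .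
qed

lemma GV_iff: "J \<in> GV \<longleftrightarrow> d_ideal J \<and> fg_ideal J \<and> finv (embD ` J) = range embD"
proof -
  have "finv (embD ` J) = range embD" if "d_ideal J" "finv (finv (embD ` J)) = range embD"
  proof -
    have "finv (embD ` J) \<subseteq> range embD"
      using subset_finv_finv[of "finv (embD ` J)"] that(2) by (simp add: finv_range)
    then show ?thesis using range_embD_subset_finv by blast
  qed
  then show ?thesis by (auto simp: GV_def vcl_def finv_range)
qed

lemma mem_range_embD_if_GV:
  "J \<in> GV \<Longrightarrow> \<forall>j\<in>J. x * embD j \<in> range embD \<Longrightarrow> x \<in> range embD"
  unfolding GV_iff finv_def by blast

lemma wcl_ideal_subset_range: "wcl (*) (embD ` I) \<subseteq> range embD"
proof
  fix x assume "x \<in> wcl (*) (embD ` I)"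
  then obtain J where "J \<in> GV" "\<forall>j\<in>J. embD j * x \<in> embD ` I"
    unfolding wcl_def by blast
  then have "\<forall>j\<in>J. x * embD j \<in> range embD" by (auto simp: mult.commute)
  then show "x \<in> range embD" using mem_range_embD_if_GV \<open>J \<in> GV\<close> by blast
qed

lemma UNIV_in_GV: "(UNIV :: 'a::idom set) \<in> GV"
proof -
  have "(UNIV :: 'a set) = ideal_span {1}" unfolding ideal_span_def by auto
  then show ?thesis
    by (auto simp: GV_iff d_ideal_def fg_ideal_iff_ideal_span finv_range)
qed

lemma GV_ideal_span_mult:
  assumes "finite F1" "finite F2" "ideal_span F1 \<in> GV" "ideal_span F2 \<in> GV"
  shows "ideal_span ((\<lambda>(a, b). a * b) ` (F1 \<times> F2)) \<in> GV"
proof -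
  let ?F = "(\<lambda>(a, b). a * b) ` (F1 \<times> F2)"
  have "q \<in> range embD" if q: "q \<in> finv (embD ` ideal_span ?F)" for q
  proof -
    have "q * embD f1 \<in> range embD" if "f1 \<in> F1" for f1
    proof -
      have "\<forall>f2\<in>F2. q * embD f1 * embD f2 \<in> range embD"
      proof
        fix f2 assume "f2 \<in> F2"
        then have "f1 * f2 \<in> ideal_span ?F"
          using \<open>f1 \<in> F1\<close> assms(1,2) ideal_span_superset[of ?F] by blast
        then show "q * embD f1 * embD f2 \<in> range embD"
          using q unfolding finv_def by (auto simp: embD_mult mult.assoc)
      qed
      then show ?thesis using assms(4) finv_ideal_spanI[of F2 "q * embD f1"] by (simp add: GV_iff)
    qed
    then show ?thesis using assms(3) finv_ideal_spanI[of F1 q] by (simp add: GV_iff)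
  qed
  moreover have "fg_ideal (ideal_span ?F)"
    using assms(1,2) unfolding fg_ideal_iff_ideal_span by (intro exI[of _ ?F]) simp
  ultimately show ?thesis
    using range_embD_subset_finv by (auto simp: GV_iff d_ideal_ideal_span)
qed

section \<open>The w-operation and maximal w-ideals\<close>

lemma dsubD:
  assumes "dsub sc L"
  shows "0 \<in> L" "x \<in> L \<Longrightarrow> y \<in> L \<Longrightarrow> x + y \<in> L" "x \<in> L \<Longrightarrow> sc (embD d) x \<in> L"
  using assms by (auto simp: dsub_def)

lemma wcl_mono: "N \<subseteq> N' \<Longrightarrow> wcl sc N \<subseteq> wcl sc N'"
  unfolding wcl_def by blast

definition conductor :: "('a::idom fract \<Rightarrow> 'v \<Rightarrow> 'v) \<Rightarrow> 'v set \<Rightarrow> 'v \<Rightarrow> 'a set" where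
  "conductor sc F z = {d. sc (embD d) z \<in> F}"

context
  fixes sc :: "'a::idom fract \<Rightarrow> 'v::ab_group_add \<Rightarrow> 'v"
  assumes vs: "vector_space sc"
begin

interpretation vector_space sc by (fact vs)

lemma dsub_subset_wcl:
  assumes "dsub sc N"
  shows "N \<subseteq> wcl sc N"
proof
  fix x assume "x \<in> N"
  then have "sc (embD 1) x \<in> N" "\<forall>j\<in>UNIV. sc (embD j) x \<in> N"
    using dsubD(3)[OF assms] by simp_all
  then show "x \<in> wcl sc N"
    unfolding wcl_def using UNIV_in_GV one_neq_zero by blast
qed

lemma d_ideal_conductor:
  assumes "dsub sc F"
  shows "d_ideal (conductor sc F z)"
proof -
  have "sc (embD (x + y)) z \<in> F" if "sc (embD x) z \<in> F" "sc (embD y) z \<in> F" for x y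
    using dsubD(2)[OF assms that] by (simp add: embD_add scale_left_distrib)
  moreover have "sc (embD (a * x)) z \<in> F" if "sc (embD x) z \<in> F" for a x
    using dsubD(3)[OF assms that, of a] by (simp add: embD_mult)
  ultimately show ?thesis
    using dsubD(1)[OF assms] by (simp add: conductor_def d_ideal_def)
qed

lemma wcl_conductor_subset:
  assumes "wcl sc F = F"
  shows "wcl (*) (embD ` conductor sc F z) \<subseteq> embD ` conductor sc F z"
proof
  fix x assume "x \<in> wcl (*) (embD ` conductor sc F z)"
  then obtain e J where e: "e \<noteq> 0" "embD e * x \<in> embD ` conductor sc F z"
    and J: "J \<in> GV" "\<forall>j\<in>J. embD j * x \<in> embD ` conductor sc F z"
    unfolding wcl_def by blast
  obtain y where y: "x = embD y"
    using wcl_ideal_subset_range \<open>x \<in> wcl (*) (embD ` conductor sc F z)\<close> by blast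
  have "sc (embD y) z \<in> wcl sc F"
    unfolding wcl_def using e J
    by (auto simp: y conductor_def simp flip: embD_mult intro!: exI[of _ e] bexI[of _ J])
  then show "x \<in> embD ` conductor sc F z"
    using assms by (simp add: y conductor_def)
qed

end

lemma w_ideal_iff: "w_ideal I \<longleftrightarrow> d_ideal I \<and> wcl (*) (embD ` I) \<subseteq> embD ` I"
  using dsub_subset_wcl[OF vector_space_fract_mult] dsub_embD_image_iff
  unfolding w_ideal_def by blast

lemma w_ideal_conductor:
  assumes "vector_space sc" "dsub sc F" "wcl sc F = F"
  shows "w_ideal (conductor sc F z)"
  using assms d_ideal_conductor wcl_conductor_subset unfolding w_ideal_iff by blast

lemma w_ideal_zero: "w_ideal {0}"
  by (auto simp: w_ideal_iff d_ideal_def wcl_def)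

lemma w_ideal_GV_subset_zero:
  assumes "w_ideal I" "I \<noteq> UNIV" "J \<in> GV" "J \<subseteq> I"
  shows "I \<subseteq> {0}"
proof
  fix d assume "d \<in> I"
  show "d \<in> {0}"
  proof (rule ccontr)
    assume "d \<notin> {0}"
    then have "1 \<in> wcl (*) (embD ` I)"
      unfolding wcl_def using assms(3,4) \<open>d \<in> I\<close> by (auto intro!: exI[of _ d] bexI[of _ J])
    then have "1 \<in> I"
      using assms(1) unfolding w_ideal_iff by (metis embD_1 embD_in_image_iff subsetD)
    then show False using assms(1,2) d_ideal_eq_UNIV w_ideal_iff by blast
  qed
qed

lemma max_w_idealD:
  assumes "max_w_ideal m"
  shows "w_ideal m" "d_ideal m" "0 \<in> m" "1 \<notin> m"
proof -
  show "w_ideal m" using assms by (simp add: max_w_ideal_def)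
  then show "d_ideal m" by (simp add: w_ideal_def)
  then show "0 \<in> m" by (rule d_idealD(1))
  show "1 \<notin> m" using assms \<open>d_ideal m\<close> d_ideal_eq_UNIV by (auto simp: max_w_ideal_def)
qed

lemma notin_max_w_ideal_nonzero: "max_w_ideal m \<Longrightarrow> t \<notin> m \<Longrightarrow> t \<noteq> 0"
  using max_w_idealD(3) by blast

lemma max_w_ideal_mult_notin:
  assumes m: "max_w_ideal m" and "a \<notin> m" "b \<notin> m"
  shows "a * b \<notin> m"
proof
  assume "a * b \<in> m"
  let ?Q = "conductor (*) (embD ` m) (embD a)"
  have Q: "d \<in> ?Q \<longleftrightarrow> d * a \<in> m" for d
    by (simp add: conductor_def flip: embD_mult)
  have "dsub (*) (embD ` m)" "wcl (*) (embD ` m) = embD ` m"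
    using max_w_idealD(1,2)[OF m] by (simp_all add: dsub_embD_image_iff w_ideal_def)
  then have "w_ideal ?Q" by (rule w_ideal_conductor[OF vector_space_fract_mult])
  moreover have "m \<subseteq> ?Q"
    using d_idealD(3)[OF max_w_idealD(2)[OF m]] by (metis Q mult.commute subsetI)
  moreover have "?Q \<noteq> UNIV" using \<open>a \<notin> m\<close> Q[of 1] by auto
  ultimately have "?Q = m" using m unfolding max_w_ideal_def by blast
  moreover have "b \<in> ?Q" using \<open>a * b \<in> m\<close> by (simp add: Q mult.commute)
  ultimately show False using \<open>b \<notin> m\<close> by simp
qed

definition GV_free :: "'a::idom set \<Rightarrow> bool" where
  "GV_free I \<longleftrightarrow> d_ideal I \<and> (\<forall>J\<in>GV. \<not> J \<subseteq> I)"

lemma d_ideal_chain_Union: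
  assumes "C \<noteq> {}" "subset.chain (Collect d_ideal) C"
  shows "d_ideal (\<Union>C)"
  unfolding d_ideal_def
proof (intro conjI ballI allI)
  obtain B where "B \<in> C" using assms(1) by blast
  then have "0 \<in> B" using assms(2) d_idealD(1) by (auto simp: subset_chain_def)
  then show "0 \<in> \<Union>C" using \<open>B \<in> C\<close> by blast
next
  fix x y assume "x \<in> \<Union>C" "y \<in> \<Union>C"
  then obtain B where "B \<in> C" "{x, y} \<subseteq> B"
    using finite_subset_Union_chain[of "{x, y}" C] assms by blast
  then show "x + y \<in> \<Union>C"
    using assms(2) by (auto simp: subset_chain_def dest: d_idealD(2))
next
  fix a x assume "x \<in> \<Union>C"
  then show "a * x \<in> \<Union>C"
    using assms(2) by (auto simp: subset_chain_def dest: d_idealD(3))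
qed

lemma GV_free_chain_Union:
  assumes "C \<noteq> {}" "subset.chain (Collect GV_free) C"
  shows "GV_free (\<Union>C)"
proof -
  have "subset.chain (Collect d_ideal) C"
    using assms(2) by (auto simp: subset_chain_def GV_free_def)
  then have "d_ideal (\<Union>C)" using d_ideal_chain_Union[OF assms(1)] by blast
  moreover have "\<not> J \<subseteq> \<Union>C" if "J \<in> GV" for J
  proof
    assume "J \<subseteq> \<Union>C"
    obtain F where F: "finite F" "J = ideal_span F"
      using \<open>J \<in> GV\<close> by (rule GV_obtain_generators)
    then obtain B where B: "B \<in> C" "F \<subseteq> B"
      using finite_subset_Union_chain[of F C] assms \<open>J \<subseteq> \<Union>C\<close> ideal_span_superset by blast
    then have "GV_free B" using assms(2) by (auto simp: subset_chain_def)
    then show False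
      using B(2) F ideal_span_least[of B F] \<open>J \<in> GV\<close> by (auto simp: GV_free_def)
  qed
  ultimately show ?thesis by (simp add: GV_free_def)
qed

lemma GV_subset_if_GV_subset_add_principal:
  assumes Q: "d_ideal Q" and J: "J \<in> GV" "\<forall>j\<in>J. j * y \<in> Q"
    and J': "J' \<in> GV" "J' \<subseteq> {q + r * y | q r. q \<in> Q}"
  shows "\<exists>K\<in>GV. K \<subseteq> Q"
proof -
  obtain F1 where F1: "finite F1" "J = ideal_span F1" using J(1) by (rule GV_obtain_generators)
  obtain F2 where F2: "finite F2" "J' = ideal_span F2" using J'(1) by (rule GV_obtain_generators)
  let ?F = "(\<lambda>(a, b). a * b) ` (F1 \<times> F2)"
  have "ideal_span ?F \<subseteq> Q"
  proof (rule ideal_span_least[OF Q], clarify)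
    fix f1 f2 assume "f1 \<in> F1" "f2 \<in> F2"
    then have "f1 \<in> J" "f2 \<in> J'" using F1 F2 ideal_span_superset by blast+
    then obtain q r where qr: "f2 = q + r * y" "q \<in> Q" using J'(2) by blast
    have "f1 * f2 = f1 * q + r * (f1 * y)" by (simp add: qr algebra_simps)
    moreover have "f1 * q \<in> Q" "r * (f1 * y) \<in> Q"
      using qr(2) J(2) \<open>f1 \<in> J\<close> by (simp_all add: d_idealD(3)[OF Q])
    ultimately show "f1 * f2 \<in> Q" using d_idealD(2)[OF Q] by simp
  qed
  moreover have "ideal_span ?F \<in> GV"
    using GV_ideal_span_mult F1 F2 J(1) J'(1) by blast
  ultimately show ?thesis by blast
qed

lemma GV_free_maximal_w_ideal:
  assumes Q: "GV_free Q" and max: "\<And>Q'. GV_free Q' \<Longrightarrow> Q \<subseteq> Q' \<Longrightarrow> Q' = Q"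
  shows "w_ideal Q"
  unfolding w_ideal_iff
proof (intro conjI subsetI)
  have Qd: "d_ideal Q" using Q by (simp add: GV_free_def)
  then show "d_ideal Q" .
  fix x assume "x \<in> wcl (*) (embD ` Q)"
  then obtain J where J: "J \<in> GV" "\<forall>j\<in>J. embD j * x \<in> embD ` Q"
    unfolding wcl_def by blast
  obtain y where y: "x = embD y"
    using wcl_ideal_subset_range \<open>x \<in> wcl (*) (embD ` Q)\<close> by blast
  have yJ: "\<forall>j\<in>J. j * y \<in> Q"
    using J(2) by (simp add: y flip: embD_mult)
  have "y \<in> Q"
  proof (rule ccontr)
    assume "y \<notin> Q"
    let ?Q' = "{q + r * y | q r. q \<in> Q}"
    have "q = q + 0 * y" for q by simp
    then have "Q \<subseteq> ?Q'" by blast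
    moreover have "y = 0 + 1 * y" by simp
    then have "y \<in> ?Q'" using d_idealD(1)[OF Qd] by blast
    ultimately have "\<not> GV_free ?Q'" using max \<open>y \<notin> Q\<close> by blast
    then obtain J' where "J' \<in> GV" "J' \<subseteq> ?Q'"
      using d_ideal_add_principal[OF Qd] by (auto simp: GV_free_def)
    then show False
      using GV_subset_if_GV_subset_add_principal[OF Qd J(1) yJ] Q by (auto simp: GV_free_def)
  qed
  then show "x \<in> embD ` Q" by (simp add: y)
qed

lemma ex_max_w_ideal_superset:
  assumes "GV_free I"
  obtains m where "max_w_ideal m" "I \<subseteq> m"
proof -
  let ?P = "{Q. GV_free Q \<and> I \<subseteq> Q}"
  have "\<Union>C \<in> ?P" if C: "C \<noteq> {}" "subset.chain ?P C" for C
  proof -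
    have "subset.chain (Collect GV_free) C" using C(2) by (auto simp: subset_chain_def)
    then have "GV_free (\<Union>C)" using GV_free_chain_Union[OF C(1)] by blast
    moreover obtain B where "B \<in> C" using C(1) by blast
    then have "I \<subseteq> \<Union>C" using C(2) by (auto simp: subset_chain_def)
    ultimately show ?thesis by blast
  qed
  then obtain Q where Q: "GV_free Q" "I \<subseteq> Q" and max: "\<forall>Q'\<in>?P. Q \<subseteq> Q' \<longrightarrow> Q' = Q"
    using subset_Zorn_nonempty[of ?P] assms by blast
  have wQ: "w_ideal Q"
    using Q max by (intro GV_free_maximal_w_ideal) auto
  have "I' = Q" if I': "w_ideal I'" "I' \<noteq> UNIV" "Q \<subseteq> I'" for I'
  proof (cases "GV_free I'")
    case True
    then show ?thesis using max I'(3) Q(2) by blast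
  next
    case False
    then obtain J where "J \<in> GV" "J \<subseteq> I'" using I'(1) by (auto simp: GV_free_def w_ideal_def)
    then have "I' \<subseteq> {0}" using w_ideal_GV_subset_zero I'(1,2) by blast
    moreover have "0 \<in> Q" using Q(1) d_idealD(1) unfolding GV_free_def by blast
    ultimately show ?thesis using I'(3) by blast
  qed
  moreover have "Q \<noteq> UNIV" using Q(1) UNIV_in_GV by (auto simp: GV_free_def)
  ultimately have "max_w_ideal Q" using wQ by (simp add: max_w_ideal_def)
  then show thesis using that Q(2) by blast
qed

text \<open>When D is a field, {0} is a GV-ideal and is itself the unique maximal w-ideal.\<close>
lemma ex_max_w_ideal: "\<exists>m::'a::idom set. max_w_ideal m"
proof (cases "{0::'a} \<in> GV")
  case True
  have "I = {0}" if "w_ideal I" "I \<noteq> UNIV" "{0} \<subseteq> I" for I :: "'a set"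
    using w_ideal_GV_subset_zero[OF that(1,2) True that(3)] that(3) by blast
  moreover have "{0::'a} \<noteq> UNIV" by (metis singletonD UNIV_I zero_neq_one)
  ultimately have "max_w_ideal {0::'a}"
    using w_ideal_zero by (simp add: max_w_ideal_def)
  then show ?thesis ..
next
  case False
  have "J = {0}" if "J \<in> GV" "J \<subseteq> {0}" for J :: "'a set"
    using that d_idealD(1) by (auto simp: GV_def)
  then have "GV_free {0::'a}"
    using False by (auto simp: GV_free_def d_ideal_def)
  then show ?thesis using ex_max_w_ideal_superset by blast
qed

section \<open>Localization at maximal w-ideals\<close>

lemma rsubD:
  assumes "rsub sc R L"
  shows "0 \<in> L" "x \<in> L \<Longrightarrow> y \<in> L \<Longrightarrow> x + y \<in> L" "r \<in> R \<Longrightarrow> x \<in> L \<Longrightarrow> sc r x \<in> L"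
  using assms by (auto simp: rsub_def)

lemma dspan_least: "dsub sc L \<Longrightarrow> G \<subseteq> L \<Longrightarrow> dspan sc G \<subseteq> L"
proof -
  assume "dsub sc L" "G \<subseteq> L"
  then have "(\<Sum>g\<in>G. sc (embD (c g)) g) \<in> L" for c
    by (induct G rule: infinite_finite_induct) (auto intro: dsubD)
  then show ?thesis unfolding dspan_def by blast
qed

lemma rspan_least: "rsub sc R L \<Longrightarrow> G \<subseteq> L \<Longrightarrow> rspan sc R G \<subseteq> L"
proof -
  assume "rsub sc R L" "G \<subseteq> L"
  then have "(\<Sum>g\<in>G. sc (c g) g) \<in> L" if "\<forall>g\<in>G. c g \<in> R" for c
    using that by (induct G rule: infinite_finite_induct) (auto intro: rsubD)
  then show ?thesis unfolding rspan_def by blast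
qed

lemma dsub_Int: "dsub sc A \<Longrightarrow> dsub sc B \<Longrightarrow> dsub sc (A \<inter> B)"
  unfolding dsub_def by blast

lemma Mloc_mono: "F \<subseteq> F' \<Longrightarrow> Mloc sc m F \<subseteq> Mloc sc m F'"
  unfolding Mloc_def by blast

lemma embD_in_Dloc: "max_w_ideal m \<Longrightarrow> embD d \<in> Dloc m"
  unfolding Dloc_def using max_w_idealD(4) by force

lemma inverse_embD_in_Dloc: "t \<notin> m \<Longrightarrow> inverse (embD t) \<in> Dloc m"
  unfolding Dloc_def by (metis (mono_tags, lifting) embD_1 inverse_eq_divide mem_Collect_eq)

lemma dsub_if_rsub_Dloc: "max_w_ideal m \<Longrightarrow> rsub sc (Dloc m) X \<Longrightarrow> dsub sc X"
  unfolding dsub_def using embD_in_Dloc rsubD by metis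

lemma finite_max_w_ideals_colon:
  assumes "finite_w_char sc M" "a \<in> M" "a \<noteq> 0"
  shows "finite {m. max_w_ideal m \<and> colon sc a M \<subseteq> m}"
proof (cases "colon sc a M = UNIV")
  case True
  then have "{m. max_w_ideal m \<and> colon sc a M \<subseteq> m} = {}"
    using max_w_idealD(4) by blast
  then show ?thesis by (metis finite.emptyI)
qed (use assms in \<open>simp add: finite_w_char_def\<close>)

context
  fixes sc :: "'a::idom fract \<Rightarrow> 'v::ab_group_add \<Rightarrow> 'v"
  assumes vs: "vector_space sc"
begin

interpretation vector_space sc by (fact vs)

lemma dsub_dspan: "dsub sc (dspan sc G)"
  unfolding dsub_def dspan_def
proof (intro conjI ballI allI)
  show "0 \<in> {\<Sum>g\<in>G. sc (embD (c g)) g | c. True}"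
    by (intro CollectI exI[of _ "\<lambda>_. 0"]) simp
next
  fix x y assume "x \<in> {\<Sum>g\<in>G. sc (embD (c g)) g | c. True}" "y \<in> {\<Sum>g\<in>G. sc (embD (c g)) g | c. True}"
  then obtain c1 c2 where "x = (\<Sum>g\<in>G. sc (embD (c1 g)) g)" "y = (\<Sum>g\<in>G. sc (embD (c2 g)) g)"
    by blast
  then have "x + y = (\<Sum>g\<in>G. sc (embD (c1 g + c2 g)) g)"
    by (simp add: embD_add scale_left_distrib sum.distrib)
  then show "x + y \<in> {\<Sum>g\<in>G. sc (embD (c g)) g | c. True}" by auto
next
  fix d x assume "x \<in> {\<Sum>g\<in>G. sc (embD (c g)) g | c. True}"
  then obtain c where "x = (\<Sum>g\<in>G. sc (embD (c g)) g)" by blast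
  then have "sc (embD d) x = (\<Sum>g\<in>G. sc (embD (d * c g)) g)"
    by (simp add: embD_mult scale_sum_right)
  then show "sc (embD d) x \<in> {\<Sum>g\<in>G. sc (embD (c g)) g | c. True}" by auto
qed

lemma dspan_superset: "finite G \<Longrightarrow> G \<subseteq> dspan sc G"
proof
  fix x assume "finite G" "x \<in> G"
  have "(\<Sum>g\<in>G. sc (embD (if g = x then 1 else 0)) g) = (\<Sum>g\<in>G. if g = x then g else 0)"
    by (rule sum.cong) simp_all
  then have "x = (\<Sum>g\<in>G. sc (embD (if g = x then 1 else 0)) g)"
    using \<open>finite G\<close> \<open>x \<in> G\<close> by simp
  then show "x \<in> dspan sc G"
    unfolding dspan_def by (intro CollectI exI[of _ "\<lambda>g. if g = x then 1 else 0"]) simp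
qed

lemma dspan_mono: "finite G' \<Longrightarrow> G \<subseteq> G' \<Longrightarrow> dspan sc G \<subseteq> dspan sc G'"
  using dspan_least[OF dsub_dspan] dspan_superset by blast

lemma mem_Mloc_iff:
  assumes "max_w_ideal m"
  shows "z \<in> Mloc sc m F \<longleftrightarrow> (\<exists>t. t \<notin> m \<and> sc (embD t) z \<in> F)"
proof
  assume "z \<in> Mloc sc m F"
  then obtain x t where "z = sc (inverse (embD t)) x" "x \<in> F" "t \<notin> m"
    unfolding Mloc_def by blast
  moreover have "t \<noteq> 0" using notin_max_w_ideal_nonzero[OF assms \<open>t \<notin> m\<close>] .
  ultimately show "\<exists>t. t \<notin> m \<and> sc (embD t) z \<in> F" by auto
next
  assume "\<exists>t. t \<notin> m \<and> sc (embD t) z \<in> F"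
  then obtain t where t: "t \<notin> m" "sc (embD t) z \<in> F" by blast
  then have "z = sc (inverse (embD t)) (sc (embD t) z)"
    using notin_max_w_ideal_nonzero[OF assms] by simp
  then show "z \<in> Mloc sc m F" unfolding Mloc_def using t by blast
qed

lemma subset_Mloc: "max_w_ideal m \<Longrightarrow> F \<subseteq> Mloc sc m F"
  using max_w_idealD(4) mem_Mloc_iff[of m _ F] by (metis embD_1 scale_one subsetI)

lemma rsub_Mloc:
  assumes m: "max_w_ideal m" and F: "dsub sc F"
  shows "rsub sc (Dloc m) (Mloc sc m F)"
  unfolding rsub_def
proof (intro conjI ballI)
  show "0 \<in> Mloc sc m F" using subset_Mloc[OF m] dsubD(1)[OF F] by blast
next
  fix z1 z2 assume "z1 \<in> Mloc sc m F" "z2 \<in> Mloc sc m F"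
  then obtain t1 t2 where t: "t1 \<notin> m" "sc (embD t1) z1 \<in> F" "t2 \<notin> m" "sc (embD t2) z2 \<in> F"
    using mem_Mloc_iff[OF m] by meson
  have "sc (embD (t1 * t2)) (z1 + z2) = sc (embD t2) (sc (embD t1) z1) + sc (embD t1) (sc (embD t2) z2)"
    by (simp add: scale_right_distrib embD_mult mult_ac)
  also have "\<dots> \<in> F" using t dsubD[OF F] by blast
  finally show "z1 + z2 \<in> Mloc sc m F"
    using max_w_ideal_mult_notin[OF m t(1,3)] mem_Mloc_iff[OF m] by blast
next
  fix r z assume "r \<in> Dloc m" "z \<in> Mloc sc m F"
  then obtain a b t where r: "r = embD a / embD b" "b \<notin> m" and t: "t \<notin> m" "sc (embD t) z \<in> F"
    unfolding Dloc_def using mem_Mloc_iff[OF m] by blast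
  have "embD b \<noteq> 0" using notin_max_w_ideal_nonzero[OF m r(2)] by simp
  then have "sc (embD (b * t)) (sc r z) = sc (embD a) (sc (embD t) z)"
    by (simp add: r embD_mult divide_inverse mult_ac)
  also have "\<dots> \<in> F" using t dsubD[OF F] by blast
  finally show "sc r z \<in> Mloc sc m F"
    using max_w_ideal_mult_notin[OF m r(2) t(1)] mem_Mloc_iff[OF m] by blast
qed

lemma rsub_Dloc_cancel:
  assumes "max_w_ideal m" "rsub sc (Dloc m) X" "t \<notin> m" "sc (embD t) z \<in> X"
  shows "z \<in> X"
proof -
  have "z = sc (inverse (embD t)) (sc (embD t) z)"
    using notin_max_w_ideal_nonzero[OF assms(1,3)] by simp
  then show ?thesis using rsubD(3)[OF assms(2) inverse_embD_in_Dloc[OF assms(3)] assms(4)] by simp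
qed

lemma Mloc_eq_if_rsub:
  assumes m: "max_w_ideal m" and N: "rsub sc (Dloc m) N"
  shows "Mloc sc m N = N"
proof
  show "Mloc sc m N \<subseteq> N"
    using mem_Mloc_iff[OF m] rsub_Dloc_cancel[OF m N] by blast
qed (rule subset_Mloc[OF m])

lemma Mloc_dspan_subset_rspan: "Mloc sc m (dspan sc G) \<subseteq> rspan sc (Dloc m) G"
proof
  fix z assume "z \<in> Mloc sc m (dspan sc G)"
  then obtain c t where z: "z = sc (inverse (embD t)) (\<Sum>g\<in>G. sc (embD (c g)) g)" and "t \<notin> m"
    unfolding Mloc_def dspan_def by blast
  have "z = (\<Sum>g\<in>G. sc (embD (c g) / embD t) g)"
    by (simp add: z scale_sum_right divide_inverse mult.commute)
  moreover have "embD (c g) / embD t \<in> Dloc m" for g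
    unfolding Dloc_def using \<open>t \<notin> m\<close> by blast
  ultimately show "z \<in> rspan sc (Dloc m) G"
    unfolding rspan_def by (intro CollectI exI[of _ "\<lambda>g. embD (c g) / embD t"]) simp
qed

section \<open>The local-global principle for the w-operation\<close>

lemma wcl_subset_Mloc:
  assumes m: "max_w_ideal m"
  shows "wcl sc N \<subseteq> Mloc sc m N"
proof
  fix x assume "x \<in> wcl sc N"
  then obtain d J where d: "d \<noteq> 0" "sc (embD d) x \<in> N"
    and J: "J \<in> GV" "\<forall>j\<in>J. sc (embD j) x \<in> N"
    unfolding wcl_def by blast
  have "\<exists>t. t \<notin> m \<and> sc (embD t) x \<in> N"
  proof (cases "J \<subseteq> m")
    case True
    then have "m \<subseteq> {0}"
      using w_ideal_GV_subset_zero max_w_idealD(1,4)[OF m] J(1) by blast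
    then show ?thesis using d by blast
  qed (use J in blast)
  then show "x \<in> Mloc sc m N" using mem_Mloc_iff[OF m] by blast
qed

text \<open>The conductor (F : z) lies in no maximal w-ideal, so it contains a GV-ideal; it has a
  nonzero element because some maximal w-ideal exists.\<close>
lemma mem_wcl_iff_Mloc:
  assumes F: "dsub sc F"
  shows "z \<in> wcl sc F \<longleftrightarrow> (\<forall>m. max_w_ideal m \<longrightarrow> z \<in> Mloc sc m F)"
proof (intro iffI allI impI)
  assume loc: "\<forall>m. max_w_ideal m \<longrightarrow> z \<in> Mloc sc m F"
  let ?I = "conductor sc F z"
  have outside: "\<exists>t\<in>?I. t \<notin> m" if "max_w_ideal m" for m
    using loc that mem_Mloc_iff[OF that, of z F] unfolding conductor_def by blast
  have "\<not> GV_free ?I"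
  proof
    assume "GV_free ?I"
    then obtain m where "max_w_ideal m" "?I \<subseteq> m" by (rule ex_max_w_ideal_superset)
    then show False using outside by blast
  qed
  then obtain J where J: "J \<in> GV" "J \<subseteq> ?I"
    using d_ideal_conductor[OF vs F] by (auto simp: GV_free_def)
  obtain m :: "'a set" where m: "max_w_ideal m" using ex_max_w_ideal by blast
  then obtain t where "t \<in> ?I" "t \<notin> m" using outside by blast
  then have "t \<in> ?I" "t \<noteq> 0" using notin_max_w_ideal_nonzero[OF m] by auto
  then show "z \<in> wcl sc F"
    using J unfolding wcl_def conductor_def by blast
qed (use wcl_subset_Mloc in blast)

section \<open>S-SM-modules and w-locally S-Noetherian modules\<close>

lemma Int_w_submodule:
  assumes m: "max_w_ideal m" and M: "dsub sc M" "wcl sc M = M" and N: "rsub sc (Dloc m) N"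
  shows "dsub sc (N \<inter> M)" "wcl sc (N \<inter> M) = N \<inter> M"
proof -
  show L: "dsub sc (N \<inter> M)" using dsub_Int dsub_if_rsub_Dloc[OF m N] M(1) by blast
  have "wcl sc (N \<inter> M) \<subseteq> M" using wcl_mono[of "N \<inter> M" M] M(2) by blast
  moreover have "wcl sc (N \<inter> M) \<subseteq> N"
    using wcl_subset_Mloc[OF m] Mloc_mono[of "N \<inter> M" N] Mloc_eq_if_rsub[OF m N] by blast
  ultimately show "wcl sc (N \<inter> M) = N \<inter> M" using dsub_subset_wcl[OF vs L] by blast
qed

lemma S_SM_imp_w_loc_S_noetherian:
  assumes M: "dsub sc M" "wcl sc M = M" and SM: "S_SM sc S M"
  shows "w_loc_S_noetherian sc S M"
  unfolding w_loc_S_noetherian_def S_noetherian_def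
proof (intro allI impI, elim conjE)
  fix m N assume m: "max_w_ideal m" and N: "rsub sc (Dloc m) N" "N \<subseteq> Mloc sc m M"
  let ?L = "N \<inter> M"
  have L: "dsub sc ?L" "wcl sc ?L = ?L" using Int_w_submodule[OF m M N(1)] by blast+
  then obtain s G where s: "s \<in> S" and G: "finite G" "G \<subseteq> M"
    and sL: "sc (embD s) ` ?L \<subseteq> wcl sc (dspan sc G)" and GL: "wcl sc (dspan sc G) \<subseteq> wcl sc ?L"
    using SM unfolding S_SM_def S_w_finite_def by blast
  have "G \<subseteq> N"
    using dspan_superset[OF G(1)] dsub_subset_wcl[OF vs dsub_dspan] GL L(2) by blast
  then have span_N: "rspan sc (Dloc m) G \<subseteq> N" by (rule rspan_least[OF N(1)])
  have "sc (embD s) y \<in> rspan sc (Dloc m) G" if "y \<in> N" for y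
  proof -
    obtain u where u: "u \<notin> m" "sc (embD u) y \<in> M"
      using N(2) \<open>y \<in> N\<close> mem_Mloc_iff[OF m] by blast
    moreover have "sc (embD u) y \<in> N" using rsubD(3)[OF N(1) embD_in_Dloc[OF m] \<open>y \<in> N\<close>] .
    ultimately have "sc (embD s) (sc (embD u) y) \<in> Mloc sc m (dspan sc G)"
      using sL wcl_subset_Mloc[OF m] by blast
    then have "sc (embD u) (sc (embD s) y) \<in> Mloc sc m (dspan sc G)"
      by (simp add: mult.commute)
    then have "sc (embD s) y \<in> Mloc sc m (dspan sc G)"
      using rsub_Dloc_cancel[OF m rsub_Mloc[OF m dsub_dspan] u(1)] by blast
    then show ?thesis using Mloc_dspan_subset_rspan by blast
  qed
  then show "\<exists>t\<in>embD ` S. \<exists>G. finite G \<and> G \<subseteq> N \<and>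
      sc t ` N \<subseteq> rspan sc (Dloc m) G \<and> rspan sc (Dloc m) G \<subseteq> N"
    using s G(1) \<open>G \<subseteq> N\<close> span_N by blast
qed

lemma Mloc_finite_subset_lift:
  assumes m: "max_w_ideal m" and G: "finite G" "G \<subseteq> Mloc sc m L"
  obtains H where "finite H" "H \<subseteq> L" "G \<subseteq> Mloc sc m (dspan sc H)"
proof -
  have "\<forall>g\<in>G. \<exists>t. t \<notin> m \<and> sc (embD t) g \<in> L"
    using G(2) mem_Mloc_iff[OF m] by blast
  then obtain u where u: "\<forall>g\<in>G. u g \<notin> m \<and> sc (embD (u g)) g \<in> L"
    by (rule bchoice[THEN exE])
  let ?H = "(\<lambda>g. sc (embD (u g)) g) ` G"
  have "g \<in> Mloc sc m (dspan sc ?H)" if "g \<in> G" for g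
  proof -
    have "sc (embD (u g)) g \<in> dspan sc ?H"
      using dspan_superset[of ?H] G(1) that by blast
    then show ?thesis using u that mem_Mloc_iff[OF m] by blast
  qed
  moreover have "?H \<subseteq> L" using u by blast
  ultimately show thesis using that G(1) by blast
qed

lemma S_noetherian_Mloc_obtain:
  assumes m: "max_w_ideal m" and SN: "S_noetherian sc (Dloc m) (embD ` S) (Mloc sc m M)"
    and L: "dsub sc L" "L \<subseteq> M"
  obtains s H where "s \<in> S" "finite H" "H \<subseteq> L" "sc (embD s) ` L \<subseteq> Mloc sc m (dspan sc H)"
proof -
  have "rsub sc (Dloc m) (Mloc sc m L) \<and> Mloc sc m L \<subseteq> Mloc sc m M"
    using rsub_Mloc[OF m L(1)] Mloc_mono[OF L(2)] by blast
  then have "\<exists>t\<in>embD ` S. \<exists>G. finite G \<and> G \<subseteq> Mloc sc m L \<and>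
      sc t ` Mloc sc m L \<subseteq> rspan sc (Dloc m) G \<and> rspan sc (Dloc m) G \<subseteq> Mloc sc m L"
    using SN unfolding S_noetherian_def by blast
  then obtain s G where s: "s \<in> S" and G: "finite G" "G \<subseteq> Mloc sc m L"
    and sG: "sc (embD s) ` Mloc sc m L \<subseteq> rspan sc (Dloc m) G"
    by blast
  obtain H where H: "finite H" "H \<subseteq> L" "G \<subseteq> Mloc sc m (dspan sc H)"
    using Mloc_finite_subset_lift[OF m G] .
  have "rspan sc (Dloc m) G \<subseteq> Mloc sc m (dspan sc H)"
    using rspan_least[OF rsub_Mloc[OF m dsub_dspan] H(3)] .
  then have "sc (embD s) ` L \<subseteq> Mloc sc m (dspan sc H)"
    using sG subset_Mloc[OF m] by blast
  then show thesis using that s H(1,2) by blast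
qed

lemma mem_Mloc_if_colon_not_subset:
  assumes m: "max_w_ideal m" and "\<not> colon sc a M \<subseteq> m" "x \<in> M" "dsub sc F" "a \<in> F"
  shows "x \<in> Mloc sc m F"
proof -
  obtain d where "d \<in> colon sc a M" "d \<notin> m" using assms(2) by blast
  then obtain e where "sc (embD d) x = sc (embD e) a"
    using assms(3) unfolding colon_def by auto
  moreover have "sc (embD e) a \<in> F" using dsubD(3)[OF assms(4,5)] .
  ultimately show ?thesis using mem_Mloc_iff[OF m] \<open>d \<notin> m\<close> by auto
qed

lemma S_noetherian_Mloc_finite:
  assumes "finite Ms" and S: "mult_subset S" and L: "dsub sc L" "L \<subseteq> M"
    and SN: "\<forall>m\<in>Ms. max_w_ideal m \<and> S_noetherian sc (Dloc m) (embD ` S) (Mloc sc m M)"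
  shows "\<exists>s\<in>S. \<exists>G. finite G \<and> G \<subseteq> L \<and> (\<forall>m\<in>Ms. sc (embD s) ` L \<subseteq> Mloc sc m (dspan sc G))"
  using assms(1) SN
proof (induction Ms rule: finite_induct)
  case empty
  then show ?case using S by (auto simp: mult_subset_def)
next
  case (insert m Ms)
  obtain s G where s: "s \<in> S" "finite G" "G \<subseteq> L"
    and sG: "\<forall>m'\<in>Ms. sc (embD s) ` L \<subseteq> Mloc sc m' (dspan sc G)"
    using insert.IH insert.prems by blast
  have m: "max_w_ideal m" "S_noetherian sc (Dloc m) (embD ` S) (Mloc sc m M)"
    using insert.prems by blast+
  obtain s' H where s': "s' \<in> S" "finite H" "H \<subseteq> L"
    and sH: "sc (embD s') ` L \<subseteq> Mloc sc m (dspan sc H)"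
    using S_noetherian_Mloc_obtain[OF m L] .
  have "sc (embD (s * s')) x \<in> Mloc sc m' (dspan sc (G \<union> H))"
    if "m' \<in> insert m Ms" "x \<in> L" for m' x
  proof -
    let ?X = "Mloc sc m' (dspan sc (G \<union> H))"
    have m': "max_w_ideal m'" using that(1) insert.prems by blast
    have "Mloc sc m' (dspan sc G) \<subseteq> ?X" "Mloc sc m' (dspan sc H) \<subseteq> ?X"
      using s(2) s'(2) by (intro Mloc_mono dspan_mono; simp)+
    then have "sc (embD s) x \<in> ?X \<or> sc (embD s') x \<in> ?X"
      using that sG sH by blast
    moreover have X: "rsub sc (Dloc m') ?X" by (rule rsub_Mloc[OF m' dsub_dspan])
    ultimately show ?thesis
    proof (elim disjE)
      assume "sc (embD s) x \<in> ?X"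
      then have "sc (embD s') (sc (embD s) x) \<in> ?X" by (rule rsubD(3)[OF X embD_in_Dloc[OF m']])
      then show ?thesis by (simp add: embD_mult mult.commute)
    next
      assume "sc (embD s') x \<in> ?X"
      then have "sc (embD s) (sc (embD s') x) \<in> ?X" by (rule rsubD(3)[OF X embD_in_Dloc[OF m']])
      then show ?thesis by (simp add: embD_mult)
    qed
  qed
  moreover have "s * s' \<in> S" using S s(1) s'(1) by (simp add: mult_subset_def)
  moreover have "finite (G \<union> H)" "G \<union> H \<subseteq> L" using s(2,3) s'(2,3) by auto
  ultimately show ?case by blast
qed

lemma w_loc_S_noetherian_imp_S_SM:
  assumes S: "mult_subset S" and WL: "w_loc_S_noetherian sc S M" and FW: "finite_w_char sc M"
  shows "S_SM sc S M"
  unfolding S_SM_def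
proof (intro allI impI, elim conjE)
  fix L assume L: "dsub sc L" "L \<subseteq> M" "wcl sc L = L"
  have GL: "wcl sc (dspan sc G) \<subseteq> wcl sc L" if "G \<subseteq> L" for G
    using wcl_mono[OF dspan_least[OF L(1) that]] .
  show "S_w_finite sc S M L"
  proof (cases "L \<subseteq> {0}")
    case True
    then have "sc (embD 1) ` L \<subseteq> wcl sc (dspan sc {})"
      using dsub_subset_wcl[OF vs dsub_dspan] dsubD(1)[OF dsub_dspan] by auto
    then show ?thesis using S GL[of "{}"] unfolding S_w_finite_def mult_subset_def by blast
  next
    case False
    then obtain a where a: "a \<in> L" "a \<noteq> 0" by blast
    define Ms where "Ms = {m. max_w_ideal m \<and> colon sc a M \<subseteq> m}"
    have fin: "finite Ms"
      unfolding Ms_def using finite_max_w_ideals_colon[OF FW _ a(2)] a(1) L(2) by blast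
    have SN: "\<forall>m\<in>Ms. max_w_ideal m \<and> S_noetherian sc (Dloc m) (embD ` S) (Mloc sc m M)"
      using WL unfolding w_loc_S_noetherian_def Ms_def by blast
    obtain s G0 where s: "s \<in> S" "finite G0" "G0 \<subseteq> L"
      and sG0: "\<forall>m\<in>Ms. sc (embD s) ` L \<subseteq> Mloc sc m (dspan sc G0)"
      using S_noetherian_Mloc_finite[OF fin S L(1,2) SN] by blast
    let ?G = "insert a G0"
    have "sc (embD s) x \<in> Mloc sc m (dspan sc ?G)" if "x \<in> L" "max_w_ideal m" for x m
    proof (cases "colon sc a M \<subseteq> m")
      case True
      have "Mloc sc m (dspan sc G0) \<subseteq> Mloc sc m (dspan sc ?G)"
        using s(2) by (intro Mloc_mono dspan_mono) auto
      moreover have "sc (embD s) x \<in> Mloc sc m (dspan sc G0)"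
        using sG0 True that unfolding Ms_def by blast
      ultimately show ?thesis by blast
    next
      case False
      have "a \<in> dspan sc ?G" using dspan_superset[of ?G] s(2) by simp
      then have "x \<in> Mloc sc m (dspan sc ?G)"
        using mem_Mloc_if_colon_not_subset[OF that(2) False _ dsub_dspan] that(1) L(2) by blast
      then show ?thesis
        using rsubD(3)[OF rsub_Mloc[OF that(2) dsub_dspan] embD_in_Dloc[OF that(2)]] by blast
    qed
    then have "sc (embD s) ` L \<subseteq> wcl sc (dspan sc ?G)"
      using mem_wcl_iff_Mloc[OF dsub_dspan] by blast
    moreover have "wcl sc (dspan sc ?G) \<subseteq> wcl sc L" using GL s(3) a(1) by simp
    moreover have "finite ?G" "?G \<subseteq> M" using s(2,3) a(1) L(2) by auto
    ultimately show ?thesis unfolding S_w_finite_def using s(1) by blast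
  qed
qed

end

theorem proposition3p5:
  fixes sc :: "'a::idom fract \<Rightarrow> 'v::ab_group_add \<Rightarrow> 'v"
    and S :: "'a set" and M :: "'v set"
  assumes "vector_space sc"
    and "mult_subset S"
    and "dsub sc M"
    and "wcl sc M = M"
  shows "(S_SM sc S M \<longrightarrow> w_loc_S_noetherian sc S M) \<and>
         (w_loc_S_noetherian sc S M \<and> finite_w_char sc M \<longrightarrow> S_SM sc S M)"
  using S_SM_imp_w_loc_S_noetherian[OF assms(1,3,4)] w_loc_S_noetherian_imp_S_SM[OF assms(1,2)]
  by blast

end
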